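(* Let $H$ be a CAT($-1$) space and let $\Phi\in\mathcal{H}$ be such that $\Phi$ and its flip $\hat\Phi$ are Hölder (of some exponent) with Hölder constants at most $L$, and $|\Phi|\leq L$. Then there exists a function $D:\mathbb{R}_{\geq0}\to\mathbb{R}$ such that for any two geodesics $\gamma_1,\gamma_2\in SH$, any $r\geq 0$ and any $t_1,t_2\in\mathbb{R}$ with $d(\gamma_1(0),\gamma_2(0))\leq r$ and $d(\gamma_1(t_1),\gamma_2(t_2))\leq r$, we have $|d^\Phi(\gamma_1(0),\gamma_1(t_1))-d^\Phi(\gamma_2(0),\gamma_2(t_2))|\leq D(r)$.
   Context: $SH$ is the space of unit speed bi-infinite geodesics $\gamma:\mathbb{R}\to H$ with metric $\operatorname{dist}(\gamma_1,\gamma_2)=\frac12\int_{-\infty}^{\infty}d(\gamma_1(t),\gamma_2(t))e^{-|t|}dt$ and geodesic flow $\mathsf g^t\gamma(s)=\gamma(s+t)$; every geodesic segment is assumed to extend to a bi-infinite geodesic. The flip of $\gamma$ is $-\gamma(t)=\gamma(-t)$ and $\hat\Phi(\gamma)=\Phi(-\gamma)$. $\mathcal{H}$ is the set of bounded Hölder functions $\Phi:(SH,\operatorname{dist})\to\mathbb{R}$ with $\Phi(\gamma_1)=\Phi(\gamma_2)$ whenever $\gamma_1|_{[0,\epsilon]}=\gamma_2|_{[0,\epsilon]}$ for some $\epsilon>0$. For $p\neq q$, $d^\Phi(p,q)=\int_0^{d(p,q)}\Phi(\mathsf g^t\gamma_{p,q})dt$ where $\gamma_{p,q}\in SH$ is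 any geodesic with $\gamma_{p,q}(0)=p$, $\gamma_{p,q}(d(p,q))=q$ (and $d^\Phi(p,p)=0$). *)

theory Defs
  imports "HOL-Analysis.Analysis"
begin

definition geodesic_segment :: "(real \<Rightarrow> 'a::metric_space) \<Rightarrow> 'a \<Rightarrow> 'a \<Rightarrow> bool" where
  "geodesic_segment c p q \<longleftrightarrow> c 0 = p \<and> c (dist p q) = q \<and>
     (\<forall>s\<in>{0..dist p q}. \<forall>t\<in>{0..dist p q}. dist (c s) (c t) = \<bar>s - t\<bar>)"

definition geodesic_space :: "'a::metric_space itself \<Rightarrow> bool" where
  "geodesic_space _ \<longleftrightarrow> (\<forall>p q::'a. \<exists>c. geodesic_segment c p q)"

text \<open>For points x = cq s on
  the side [p,q] and y = cr u on the side [p,r], the distance between the comparison points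
  in the hyperbolic plane is given by the hyperbolic law of cosines, with the comparison
  angle at p determined by the three side lengths a = d(p,q), b = d(p,r), c = d(q,r).\<close>
definition CAT_minus_one :: "'a::metric_space itself \<Rightarrow> bool" where
  "CAT_minus_one T \<longleftrightarrow> geodesic_space T \<and>
    (\<forall>p q r :: 'a. \<forall>cq cr. geodesic_segment cq p q \<longrightarrow> geodesic_segment cr p r \<longrightarrow>
      (\<forall>s\<in>{0..dist p q}. \<forall>u\<in>{0..dist p r}.
        cosh (dist (cq s) (cr u)) \<le>
          cosh s * cosh u - sinh s * sinh u *
            ((cosh (dist p q) * cosh (dist p r) - cosh (dist q r)) /
             (sinh (dist p q) * sinh (dist p r)))))"

definition SH :: "(real \<Rightarrow> 'a::metric_space) set" where
  "SH = {\<gamma>. \<forall>s t. dist (\<gamma> s) (\<gamma> t) = \<bar>s - t\<bar>}"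

definition distSH :: "(real \<Rightarrow> 'a::metric_space) \<Rightarrow> (real \<Rightarrow> 'a) \<Rightarrow> real" where
  "distSH \<gamma>1 \<gamma>2 = (1/2) * (LINT t|lborel. dist (\<gamma>1 t) (\<gamma>2 t) * exp (- \<bar>t\<bar>))"

definition geoflow :: "real \<Rightarrow> (real \<Rightarrow> 'a) \<Rightarrow> (real \<Rightarrow> 'a)" where
  "geoflow t \<gamma> = (\<lambda>s. \<gamma> (s + t))"

definition flip :: "(real \<Rightarrow> 'a) \<Rightarrow> (real \<Rightarrow> 'a)" where
  "flip \<gamma> = (\<lambda>t. \<gamma> (- t))"

definition hat :: "((real \<Rightarrow> 'a) \<Rightarrow> real) \<Rightarrow> ((real \<Rightarrow> 'a) \<Rightarrow> real)" where
  "hat \<Phi> = (\<lambda>\<gamma>. \<Phi> (flip \<gamma>))"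

definition hoelder_SH :: "((real \<Rightarrow> 'a::metric_space) \<Rightarrow> real) \<Rightarrow> real \<Rightarrow> real \<Rightarrow> bool" where
  "hoelder_SH \<Phi> \<alpha> C \<longleftrightarrow> 0 < \<alpha> \<and> \<alpha> \<le> 1 \<and>
     (\<forall>\<gamma>1\<in>SH. \<forall>\<gamma>2\<in>SH. \<bar>\<Phi> \<gamma>1 - \<Phi> \<gamma>2\<bar> \<le> C * distSH \<gamma>1 \<gamma>2 powr \<alpha>)"

definition Hclass :: "((real \<Rightarrow> 'a::metric_space) \<Rightarrow> real) set" where
  "Hclass = {\<Phi>. (\<exists>B. \<forall>\<gamma>\<in>SH. \<bar>\<Phi> \<gamma>\<bar> \<le> B) \<and> (\<exists>\<alpha> C. hoelder_SH \<Phi> \<alpha> C) \<and>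
     (\<forall>\<gamma>1\<in>SH. \<forall>\<gamma>2\<in>SH. (\<exists>\<epsilon>>0. \<forall>t\<in>{0..\<epsilon>}. \<gamma>1 t = \<gamma>2 t) \<longrightarrow> \<Phi> \<gamma>1 = \<Phi> \<gamma>2)}"

text \<open>d^Phi(p,q); the choice of the geodesic through p and q is irrelevant for Phi in Hclass
  on a CAT(-1) space (unique geodesics, Phi depends only on the forward germ).\<close>
definition dPhi :: "((real \<Rightarrow> 'a::metric_space) \<Rightarrow> real) \<Rightarrow> 'a \<Rightarrow> 'a \<Rightarrow> real" where
  "dPhi \<Phi> p q = (if p = q then 0 else
     (let \<gamma> = (SOME \<gamma>. \<gamma> \<in> SH \<and> \<gamma> 0 = p \<and> \<gamma> (dist p q) = q)
      in integral {0..dist p q} (\<lambda>t. \<Phi> (geoflow t \<gamma>))))"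

end

theory Submission
  imports Defs
begin

text \<open>In a CAT(-1) space, two geodesics \<open>\<sigma>\<close>, \<open>\<tau>\<close> from a common point whose points at times
  \<open>T1 \<le> T2\<close> are \<open>r\<close>-close satisfy \<open>d(\<sigma> s, \<tau> s) \<le> sqrt (2 cosh r) exp (s - T1)\<close> on \<open>[0, T1]\<close>, by the
  hyperbolic law of cosines in the comparison triangle. So the flowed geodesics \<open>g\<^sup>t \<sigma>\<close>, \<open>g\<^sup>t \<tau>\<close> are
  \<open>distSH\<close>-close up to a factor \<open>exp (- t/2) + exp ((t - T1)/2)\<close>, and by Hoelder continuity
  \<open>\<bar>\<Phi> (g\<^sup>t \<sigma>) - \<Phi> (g\<^sup>t \<tau>)\<bar>\<close> has an integral over \<open>[0, T1]\<close> bounded independently of \<open>T1\<close>; the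
  rest of \<open>\<tau>\<close> has length at most \<open>r\<close>. A general pair of segments with close endpoints is
  reduced to this case through a third geodesic.\<close>

lemma half_sq_le_cosh_minus_one: "(x::real)^2 / 2 \<le> cosh x - 1"
proof -
  have cosh_eq: "cosh x = 1 + 2 * sinh (x/2) ^ 2"
    using cosh_double[of "x/2"] by (simp add: cosh_square_eq)
  have "\<bar>x/2\<bar> \<le> \<bar>sinh (x/2)\<bar>"
    using real_le_abs_sinh[of "x/2"] by (simp add: sinh_field_def exp_minus)
  hence "(x/2)^2 \<le> sinh (x/2) ^ 2"
    by (metis abs_le_square_iff)
  thus ?thesis using cosh_eq by (simp add: power_divide)
qed

lemma sinh_le_sinh_mul_exp_diff:
  assumes "0 \<le> s" "s \<le> (m::real)"
  shows "sinh s \<le> sinh m * exp (s - m)"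
proof -
  have "sinh m * exp (s - m) = (exp s - exp (s - 2*m)) / 2"
    by (simp add: sinh_field_def field_simps exp_diff exp_minus mult_exp_exp exp_add[symmetric])
  moreover have "exp (s - 2*m) \<le> exp (-s)" using assms by simp
  ultimately show ?thesis by (simp add: sinh_field_def)
qed

lemma two_mul_le_four_exp_half: "0 \<le> (w::real) \<Longrightarrow> 2 * w \<le> 4 * exp (w / 2)"
  using exp_ge_add_one_self[of "w/2"] by linarith

lemma powr_add_le_two_mul:
  assumes "0 \<le> A" "0 \<le> B" "0 < \<alpha>" "\<alpha> \<le> (1::real)"
  shows "(A + B) powr \<alpha> \<le> 2 * (A powr \<alpha> + B powr \<alpha>)"
proof -
  have "(A + B) powr \<alpha> \<le> (2 * max A B) powr \<alpha>"
    using assms by (intro powr_mono2) auto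
  also have "\<dots> = 2 powr \<alpha> * max A B powr \<alpha>"
    using assms by (simp add: powr_mult)
  also have "\<dots> \<le> 2 * (A powr \<alpha> + B powr \<alpha>)"
  proof (rule mult_mono)
    show "2 powr \<alpha> \<le> 2" using powr_mono[of \<alpha> 1 2] assms by simp
    show "max A B powr \<alpha> \<le> A powr \<alpha> + B powr \<alpha>" by (cases "A \<le> B") (auto simp: max_def)
  qed auto
  finally show ?thesis .
qed

lemma has_integral_exp_two_sided:
  assumes "0 < a" "0 \<le> (m::real)"
  shows "((\<lambda>t. exp (a * (t - m)) + exp (- a * t)) has_integral 2 * (1 - exp (- a * m)) / a) {0..m}"
proof -
  have "((\<lambda>t. exp (a * (t - m)) + exp (- a * t)) has_integral
          (exp (a * (m - m)) / a - exp (- a * m) / a) - (exp (a * (0 - m)) / a - exp (- a * 0) / a)) {0..m}"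
    using assms
    by (intro fundamental_theorem_of_calculus)
       (auto intro!: derivative_eq_intros simp flip: has_real_derivative_iff_has_vector_derivative
             simp: field_simps)
  moreover have "(exp (a * (m - m)) / a - exp (- a * m) / a) - (exp (a * (0 - m)) / a - exp (- a * 0) / a)
      = 2 * (1 - exp (- a * m)) / a"
    using assms by (simp add: divide_simps)
  ultimately show ?thesis by simp
qed

lemma continuous_on_of_hoelder_bound:
  fixes f :: "real \<Rightarrow> real"
  assumes "0 < \<alpha>" and bound: "\<And>s t. \<bar>f s - f t\<bar> \<le> c * \<bar>s - t\<bar> powr \<alpha>"
  shows "continuous_on A f"
proof -
  have "isCont f t" for t
  proof -
    have "((\<lambda>s. c * \<bar>s - t\<bar> powr \<alpha>) \<longlongrightarrow> c * \<bar>t - t\<bar> powr \<alpha>) (at t)"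
      using \<open>0 < \<alpha>\<close> by (intro tendsto_intros) auto
    hence "((\<lambda>s. c * \<bar>s - t\<bar> powr \<alpha>) \<longlongrightarrow> 0) (at t)"
      using \<open>0 < \<alpha>\<close> by simp
    hence "((\<lambda>s. f s - f t) \<longlongrightarrow> 0) (at t)"
      by (rule Lim_null_comparison[rotated]) (use bound in auto)
    thus ?thesis unfolding isCont_def by (simp add: LIM_zero_iff)
  qed
  thus ?thesis by (simp add: continuous_at_imp_continuous_on)
qed

lemma integral_reverse_real:
  fixes f :: "real \<Rightarrow> real"
  assumes "f integrable_on {0..T}" "0 \<le> T"
  shows "integral {0..T} (\<lambda>t. f (T - t)) = integral {0..T} f"
proof -
  have "(f has_integral integral {0..T} f) (cbox 0 T)"
    using assms by (simp add: has_integral_integral)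
  from has_integral_affinity[OF this, of "-1" T]
  have "((\<lambda>x. f (- x + T)) has_integral integral {0..T} f) ((\<lambda>x. - x + T) ` {0..T})"
    by simp
  moreover have "(\<lambda>x. - x + T) ` {0..T} = {0..T}"
    using image_affinity_atLeastAtMost[of "-1" T 0 T] assms by simp
  ultimately show ?thesis
    by (simp add: integral_unique)
qed

lemma SH_dist: "\<gamma> \<in> SH \<Longrightarrow> dist (\<gamma> s) (\<gamma> t) = \<bar>s - t\<bar>"
  by (simp add: SH_def)

lemma geoflow_SH: "\<gamma> \<in> SH \<Longrightarrow> geoflow t \<gamma> \<in> SH"
  by (simp add: SH_def geoflow_def)

lemma flip_SH: "\<gamma> \<in> SH \<Longrightarrow> flip \<gamma> \<in> SH"
  by (simp add: SH_def flip_def abs_minus_commute)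

lemma reverse_SH: "\<gamma> \<in> SH \<Longrightarrow> (\<lambda>s. \<gamma> (T - s)) \<in> SH"
  by (simp add: SH_def abs_minus_commute)

lemma geodesic_segment_SH: "\<gamma> \<in> SH \<Longrightarrow> 0 \<le> T \<Longrightarrow> geodesic_segment \<gamma> (\<gamma> 0) (\<gamma> T)"
  by (simp add: geodesic_segment_def SH_dist)

lemma SH_dist_le_dist_add:
  assumes "\<sigma> \<in> SH" "\<tau> \<in> SH"
  shows "dist (\<sigma> s) (\<tau> s) \<le> dist (\<sigma> a) (\<tau> a) + 2 * \<bar>s - a\<bar>"
proof -
  have "dist (\<sigma> s) (\<tau> s) \<le> dist (\<sigma> s) (\<sigma> a) + dist (\<sigma> a) (\<tau> a) + dist (\<tau> a) (\<tau> s)"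
    using dist_triangle[of "\<sigma> s" "\<tau> s" "\<sigma> a"] dist_triangle[of "\<sigma> a" "\<tau> s" "\<tau> a"] by linarith
  thus ?thesis using assms by (simp add: SH_dist abs_minus_commute)
qed

lemma CAT_minus_one_cosh_dist_le:
  fixes \<sigma> \<tau> :: "real \<Rightarrow> 'a::metric_space"
  assumes cat: "CAT_minus_one TYPE('a)" and SH: "\<sigma> \<in> SH" "\<tau> \<in> SH" and origin: "\<sigma> 0 = \<tau> 0"
    and s: "0 \<le> s" "s \<le> T1" "s \<le> T2" and T: "0 < T1" "0 < T2"
  shows "cosh (dist (\<sigma> s) (\<tau> s)) - 1
           \<le> sinh s ^ 2 * cosh (dist (\<sigma> T1) (\<tau> T2)) / (sinh T1 * sinh T2)"
proof -
  define c where "c = dist (\<sigma> T1) (\<tau> T2)"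
  define X where "X = sinh T1 * sinh T2"
  have X: "0 < X" using T by (simp add: X_def)
  have "geodesic_segment \<sigma> (\<sigma> 0) (\<sigma> T1)" "geodesic_segment \<tau> (\<sigma> 0) (\<tau> T2)"
    using geodesic_segment_SH[OF SH(1), of T1] geodesic_segment_SH[OF SH(2), of T2] T origin
    by simp_all
  hence comparison: "\<forall>s\<in>{0..dist (\<sigma> 0) (\<sigma> T1)}. \<forall>u\<in>{0..dist (\<sigma> 0) (\<tau> T2)}.
      cosh (dist (\<sigma> s) (\<tau> u)) \<le> cosh s * cosh u - sinh s * sinh u *
        ((cosh (dist (\<sigma> 0) (\<sigma> T1)) * cosh (dist (\<sigma> 0) (\<tau> T2)) - cosh (dist (\<sigma> T1) (\<tau> T2))) /
         (sinh (dist (\<sigma> 0) (\<sigma> T1)) * sinh (dist (\<sigma> 0) (\<tau> T2))))"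
    using cat unfolding CAT_minus_one_def by blast
  have "dist (\<sigma> 0) (\<sigma> T1) = T1" "dist (\<sigma> 0) (\<tau> T2) = T2"
    using SH_dist[OF SH(1), of 0 T1] SH_dist[OF SH(2), of 0 T2] T origin by simp_all
  with comparison s have "cosh (dist (\<sigma> s) (\<tau> s))
      \<le> cosh s * cosh s - sinh s * sinh s * ((cosh T1 * cosh T2 - cosh c) / X)"
    unfolding c_def X_def by simp
  also have "cosh T1 * cosh T2 = X + cosh (T1 - T2)"
    by (simp add: X_def cosh_diff)
  also have "cosh s * cosh s - sinh s * sinh s * ((X + cosh (T1 - T2) - cosh c) / X)
      = 1 + sinh s ^ 2 * (cosh c / X) - sinh s ^ 2 * (cosh (T1 - T2) / X)"
    using X hyperbolic_pythagoras[of s] by (simp add: power2_eq_square field_simps)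
  also have "\<dots> \<le> 1 + sinh s ^ 2 * (cosh c / X)"
    using X by simp
  finally show ?thesis by (simp add: c_def X_def)
qed

lemma CAT_minus_one_dist_le_exp:
  fixes \<sigma> \<tau> :: "real \<Rightarrow> 'a::metric_space"
  assumes cat: "CAT_minus_one TYPE('a)" and SH: "\<sigma> \<in> SH" "\<tau> \<in> SH" and origin: "\<sigma> 0 = \<tau> 0"
    and s: "0 \<le> s" "s \<le> T1" "s \<le> T2" and close: "dist (\<sigma> T1) (\<tau> T2) \<le> r"
  shows "dist (\<sigma> s) (\<tau> s) \<le> sqrt (2 * cosh r) * exp (s - min T1 T2)"
proof (cases "s = 0")
  case True thus ?thesis using origin by simp
next
  case False
  define e where "e = dist (\<sigma> s) (\<tau> s)"
  define m where "m = min T1 T2"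
  have T: "0 < T1" "0 < T2" using s False by auto
  have "sinh s ^ 2 \<le> (sinh m * exp (s - m)) ^ 2"
    using s sinh_le_sinh_mul_exp_diff[of s m] by (intro power_mono) (auto simp: m_def)
  also have "\<dots> \<le> sinh T1 * sinh T2 * exp (s - m) ^ 2"
    using T by (auto simp: m_def min_def power2_eq_square intro!: mult_mono)
  finally have sinh_le: "sinh s ^ 2 / (sinh T1 * sinh T2) \<le> exp (s - m) ^ 2"
    using T by (simp add: divide_le_eq mult.commute)
  have cosh_le: "cosh (dist (\<sigma> T1) (\<tau> T2)) \<le> cosh r"
    using close by (simp add: cosh_real_nonneg_le_iff order_trans[OF zero_le_dist close])
  have "e^2 / 2 \<le> cosh e - 1"
    by (rule half_sq_le_cosh_minus_one)
  also have "\<dots> \<le> sinh s ^ 2 / (sinh T1 * sinh T2) * cosh (dist (\<sigma> T1) (\<tau> T2))"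
    using CAT_minus_one_cosh_dist_le[OF cat SH origin s T] by (simp add: e_def)
  also have "\<dots> \<le> exp (s - m) ^ 2 * cosh r"
    by (rule mult_mono[OF sinh_le cosh_le]) auto
  finally have "e^2 / 2 \<le> exp (s - m) ^ 2 * cosh r" .
  hence "e^2 \<le> (sqrt (2 * cosh r) * exp (s - m))^2"
    by (simp add: power_mult_distrib mult_ac)
  hence "e \<le> sqrt (2 * cosh r) * exp (s - m)"
    by (rule power2_le_imp_le) simp
  thus ?thesis by (simp add: e_def m_def)
qed

lemma CAT_minus_one_dist_le_exp_sum:
  fixes \<sigma> \<tau> :: "real \<Rightarrow> 'a::metric_space"
  assumes cat: "CAT_minus_one TYPE('a)" and SH: "\<sigma> \<in> SH" "\<tau> \<in> SH" and origin: "\<sigma> 0 = \<tau> 0"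
    and m: "0 \<le> m" "m \<le> T" and close: "dist (\<sigma> m) (\<tau> T) \<le> r"
  shows "dist (\<sigma> s) (\<tau> s) \<le> (sqrt (2 * cosh r) + 4) * (exp ((s - m) / 2) + exp (- s / 2))"
proof -
  define K where "K = sqrt (2 * cosh r)"
  have K: "0 \<le> K" by (simp add: K_def)
  have near: "dist (\<sigma> x) (\<tau> x) \<le> K * exp (x - m)" if "0 \<le> x" "x \<le> m" for x
    using CAT_minus_one_dist_le_exp[OF cat SH origin that _ close] that m by (simp add: K_def)
  consider "s < 0" | "0 \<le> s" "s \<le> m" | "m < s" by linarith
  then have "dist (\<sigma> s) (\<tau> s) \<le> (K + 4) * exp ((s - m) / 2)
           \<or> dist (\<sigma> s) (\<tau> s) \<le> (K + 4) * exp (- s / 2)"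
  proof cases
    case 1
    have "dist (\<sigma> s) (\<tau> s) \<le> 2 * (- s)"
      using SH_dist_le_dist_add[OF SH, of s 0] origin 1 by simp
    also have "\<dots> \<le> 4 * exp (- s / 2)"
      using two_mul_le_four_exp_half[of "- s"] 1 by simp
    also have "\<dots> \<le> (K + 4) * exp (- s / 2)"
      using K by simp
    finally show ?thesis by blast
  next
    case 2
    have "dist (\<sigma> s) (\<tau> s) \<le> K * exp (s - m)"
      using near 2 by blast
    also have "\<dots> \<le> (K + 4) * exp ((s - m) / 2)"
      using K 2 by (intro mult_mono) auto
    finally show ?thesis by blast
  next
    case 3
    have "dist (\<sigma> s) (\<tau> s) \<le> K + 2 * (s - m)"
      using SH_dist_le_dist_add[OF SH, of s m] near[of m] m 3 by simp
    also have "\<dots> \<le> K * exp ((s - m) / 2) + 4 * exp ((s - m) / 2)"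
      using two_mul_le_four_exp_half[of "s - m"] K 3
      by (intro add_mono mult_le_cancel_left1[THEN iffD2]) auto
    finally show ?thesis by (simp add: distrib_right)
  qed
  moreover have "0 \<le> (K + 4) * exp ((s - m) / 2)" "0 \<le> (K + 4) * exp (- s / 2)"
    using K by simp_all
  ultimately show ?thesis
    unfolding K_def[symmetric] distrib_left by linarith
qed

definition exp_half_abs_integral :: real where
  "exp_half_abs_integral = (LINT u|lborel. exp (- \<bar>u\<bar> / 2))"

lemma integrable_exp_half_abs: "integrable lborel (\<lambda>u::real. exp (- \<bar>u\<bar> / 2))"
proof -
  let ?g = "\<lambda>u::real. exp (- \<bar>u\<bar> / 2)"
  have "(\<lambda>u. exp (- (1/2) * u) :: real) integrable_on {0..}"
    by (rule integrable_on_exp_minus_to_infinity) simp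
  hence "?g integrable_on {0..}"
    by (rule integrable_eq) auto
  hence right: "?g absolutely_integrable_on {0..}"
    by (rule nonnegative_absolutely_integrable_1) auto
  hence left: "?g absolutely_integrable_on {..0}"
    using has_absolute_integral_reflect_real[of "{..0}" "{0..}" ?g "integral {0..} ?g"] by auto
  have "{..0} \<union> {0::real..} = UNIV" by auto
  hence "integrable lebesgue ?g"
    using absolutely_integrable_Un[OF left right] by (simp add: set_integrable_def)
  moreover have "?g \<in> borel_measurable lborel"
    unfolding measurable_lborel2 by (intro borel_measurable_continuous_onI continuous_intros) auto
  ultimately show ?thesis
    by (simp add: integrable_completion)
qed

lemma exp_half_abs_integral_nonneg: "0 \<le> exp_half_abs_integral"
  unfolding exp_half_abs_integral_def by (rule integral_nonneg_AE) auto

lemma distSH_nonneg: "0 \<le> distSH \<gamma> \<eta>"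
  unfolding distSH_def by (auto intro!: integral_nonneg_AE)

lemma distSH_le_of_dist_le_exp:
  assumes P: "0 \<le> P" and bound: "\<And>u. dist (\<gamma> u) (\<eta> u) \<le> P * exp (\<bar>u\<bar> / 2)"
  shows "distSH \<gamma> \<eta> \<le> P * exp_half_abs_integral / 2"
proof -
  let ?f = "\<lambda>u. dist (\<gamma> u) (\<eta> u) * exp (- \<bar>u\<bar>)"
  have f_le: "?f u \<le> P * exp (- \<bar>u\<bar> / 2)" for u
  proof -
    have "?f u \<le> P * exp (\<bar>u\<bar> / 2) * exp (- \<bar>u\<bar>)"
      by (rule mult_right_mono[OF bound]) simp
    also have "\<dots> = P * exp (- \<bar>u\<bar> / 2)"
      by (simp add: mult.assoc mult_exp_exp)
    finally show ?thesis .
  qed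
  have "(LINT u|lborel. ?f u) \<le> P * exp_half_abs_integral"
  proof (cases "integrable lborel ?f")
    case True
    have "(LINT u|lborel. ?f u) \<le> (LINT u|lborel. P * exp (- \<bar>u\<bar> / 2))"
      by (rule integral_mono[OF True]) (use integrable_exp_half_abs f_le in auto)
    thus ?thesis by (simp add: exp_half_abs_integral_def)
  next
    case False
    thus ?thesis using P exp_half_abs_integral_nonneg by (simp add: not_integrable_integral_eq)
  qed
  thus ?thesis unfolding distSH_def by simp
qed

lemma distSH_geoflow_le:
  assumes "\<sigma> \<in> SH"
  shows "distSH (geoflow s \<sigma>) (geoflow t \<sigma>) \<le> \<bar>s - t\<bar> * exp_half_abs_integral / 2"
proof (rule distSH_le_of_dist_le_exp)
  fix u
  have "dist (geoflow s \<sigma> u) (geoflow t \<sigma> u) = \<bar>s - t\<bar>"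
    using assms by (simp add: geoflow_def SH_dist)
  also have "\<dots> \<le> \<bar>s - t\<bar> * exp (\<bar>u\<bar> / 2)"
    by (rule mult_le_cancel_left1[THEN iffD2]) simp
  finally show "dist (geoflow s \<sigma> u) (geoflow t \<sigma> u) \<le> \<bar>s - t\<bar> * exp (\<bar>u\<bar> / 2)" .
qed simp

lemma hoelder_SH_abs_diff_le:
  assumes "hoelder_SH \<Psi> \<alpha> C" "\<gamma> \<in> SH" "\<eta> \<in> SH" "distSH \<gamma> \<eta> \<le> d"
  shows "\<bar>\<Psi> \<gamma> - \<Psi> \<eta>\<bar> \<le> \<bar>C\<bar> * d powr \<alpha>"
proof -
  have "\<bar>\<Psi> \<gamma> - \<Psi> \<eta>\<bar> \<le> C * distSH \<gamma> \<eta> powr \<alpha>"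
    using assms(1-3) by (simp add: hoelder_SH_def)
  moreover have "0 < \<alpha>"
    using assms(1) by (simp add: hoelder_SH_def)
  hence "C * distSH \<gamma> \<eta> powr \<alpha> \<le> \<bar>C\<bar> * d powr \<alpha>"
    using assms(4) distSH_nonneg[of \<gamma> \<eta>] by (intro mult_mono powr_mono2) auto
  ultimately show ?thesis by linarith
qed

lemma integrable_hoelder_SH_geoflow:
  assumes H: "hoelder_SH \<Psi> \<alpha> C" and "\<sigma> \<in> SH"
  shows "(\<lambda>t. \<Psi> (geoflow t \<sigma>)) integrable_on {a..b}"
proof (rule integrable_continuous_real, rule continuous_on_of_hoelder_bound)
  show "0 < \<alpha>" using H by (simp add: hoelder_SH_def)
  fix s t
  have "\<bar>\<Psi> (geoflow s \<sigma>) - \<Psi> (geoflow t \<sigma>)\<bar> \<le> \<bar>C\<bar> * (\<bar>s - t\<bar> * exp_half_abs_integral / 2) powr \<alpha>"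
    using assms by (intro hoelder_SH_abs_diff_le[OF H] geoflow_SH distSH_geoflow_le)
  also have "\<dots> = \<bar>C\<bar> * (exp_half_abs_integral / 2) powr \<alpha> * \<bar>s - t\<bar> powr \<alpha>"
    using exp_half_abs_integral_nonneg powr_mult[of "\<bar>s - t\<bar>" "exp_half_abs_integral / 2" \<alpha>]
    by (simp add: mult_ac)
  finally show "\<bar>\<Psi> (geoflow s \<sigma>) - \<Psi> (geoflow t \<sigma>)\<bar>
      \<le> \<bar>C\<bar> * (exp_half_abs_integral / 2) powr \<alpha> * \<bar>s - t\<bar> powr \<alpha>" .
qed

lemma CAT_minus_one_distSH_geoflow_le:
  fixes \<sigma> \<tau> :: "real \<Rightarrow> 'a::metric_space"
  assumes cat: "CAT_minus_one TYPE('a)" and SH: "\<sigma> \<in> SH" "\<tau> \<in> SH" and origin: "\<sigma> 0 = \<tau> 0"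
    and m: "0 \<le> m" "m \<le> T" and close: "dist (\<sigma> m) (\<tau> T) \<le> r"
  shows "distSH (geoflow t \<sigma>) (geoflow t \<tau>)
           \<le> (sqrt (2 * cosh r) + 4) * exp_half_abs_integral / 2 * (exp ((t - m) / 2) + exp (- t / 2))"
proof -
  define K where "K = sqrt (2 * cosh r) + 4"
  have K: "0 \<le> K" by (simp add: K_def)
  have "distSH (geoflow t \<sigma>) (geoflow t \<tau>)
          \<le> K * (exp ((t - m) / 2) + exp (- t / 2)) * exp_half_abs_integral / 2"
  proof (rule distSH_le_of_dist_le_exp)
    show "0 \<le> K * (exp ((t - m) / 2) + exp (- t / 2))" using K by simp
    fix u
    have "(u + t - m) / 2 \<le> (t - m) / 2 + \<bar>u\<bar> / 2" "- (u + t) / 2 \<le> - t / 2 + \<bar>u\<bar> / 2"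
      by (simp_all add: field_simps)
    hence "exp ((u + t - m) / 2) \<le> exp ((t - m) / 2) * exp (\<bar>u\<bar> / 2)"
      "exp (- (u + t) / 2) \<le> exp (- t / 2) * exp (\<bar>u\<bar> / 2)"
      by (simp_all add: mult_exp_exp)
    hence "K * (exp ((u + t - m) / 2) + exp (- (u + t) / 2))
        \<le> K * (exp ((t - m) / 2) * exp (\<bar>u\<bar> / 2) + exp (- t / 2) * exp (\<bar>u\<bar> / 2))"
      using K by (intro mult_left_mono add_mono)
    also have "\<dots> = K * (exp ((t - m) / 2) + exp (- t / 2)) * exp (\<bar>u\<bar> / 2)"
      by (simp add: algebra_simps)
    finally have "K * (exp ((u + t - m) / 2) + exp (- (u + t) / 2))
        \<le> K * (exp ((t - m) / 2) + exp (- t / 2)) * exp (\<bar>u\<bar> / 2)" .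
    moreover have "dist (\<sigma> (u + t)) (\<tau> (u + t)) \<le> K * (exp ((u + t - m) / 2) + exp (- (u + t) / 2))"
      using CAT_minus_one_dist_le_exp_sum[OF cat SH origin m close, of "u + t"] by (simp add: K_def)
    ultimately show "dist (geoflow t \<sigma> u) (geoflow t \<tau> u)
        \<le> K * (exp ((t - m) / 2) + exp (- t / 2)) * exp (\<bar>u\<bar> / 2)"
      by (simp add: geoflow_def)
  qed
  thus ?thesis by (simp add: K_def mult_ac)
qed

lemma CAT_minus_one_hoelder_geoflow_diff_le:
  fixes \<sigma> \<tau> :: "real \<Rightarrow> 'a::metric_space"
  assumes cat: "CAT_minus_one TYPE('a)" and H: "hoelder_SH \<Psi> \<alpha> C"
    and SH: "\<sigma> \<in> SH" "\<tau> \<in> SH" and origin: "\<sigma> 0 = \<tau> 0"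
    and m: "0 \<le> m" "m \<le> T" and close: "dist (\<sigma> m) (\<tau> T) \<le> r"
  defines "Q \<equiv> (sqrt (2 * cosh r) + 4) * exp_half_abs_integral / 2"
  shows "\<bar>\<Psi> (geoflow t \<sigma>) - \<Psi> (geoflow t \<tau>)\<bar>
           \<le> 2 * \<bar>C\<bar> * Q powr \<alpha> * (exp (\<alpha> / 2 * (t - m)) + exp (- (\<alpha> / 2) * t))"
proof -
  define A where "A = exp ((t - m) / 2)"
  define B where "B = exp (- t / 2)"
  have AB: "0 \<le> A" "0 \<le> B" by (simp_all add: A_def B_def)
  have Q: "0 \<le> Q" unfolding Q_def using exp_half_abs_integral_nonneg by simp
  have \<alpha>: "0 < \<alpha>" "\<alpha> \<le> 1" using H by (simp_all add: hoelder_SH_def)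
  have "\<bar>\<Psi> (geoflow t \<sigma>) - \<Psi> (geoflow t \<tau>)\<bar> \<le> \<bar>C\<bar> * (Q * (A + B)) powr \<alpha>"
    using CAT_minus_one_distSH_geoflow_le[OF cat SH origin m close]
    by (intro hoelder_SH_abs_diff_le[OF H] geoflow_SH SH) (simp add: Q_def A_def B_def)
  also have "\<dots> = \<bar>C\<bar> * Q powr \<alpha> * (A + B) powr \<alpha>"
    using Q AB by (simp add: powr_mult)
  also have "\<dots> \<le> \<bar>C\<bar> * Q powr \<alpha> * (2 * (A powr \<alpha> + B powr \<alpha>))"
    using AB \<alpha> by (intro mult_left_mono powr_add_le_two_mul) auto
  also have "A powr \<alpha> = exp (\<alpha> / 2 * (t - m))" by (simp add: A_def powr_def)
  also have "B powr \<alpha> = exp (- (\<alpha> / 2) * t)" by (simp add: B_def powr_def)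
  finally show ?thesis by (simp add: algebra_simps)
qed

definition flow_integral :: "((real \<Rightarrow> 'a) \<Rightarrow> real) \<Rightarrow> (real \<Rightarrow> 'a) \<Rightarrow> real \<Rightarrow> real" where
  "flow_integral \<Psi> \<sigma> T = integral {0..T} (\<lambda>t. \<Psi> (geoflow t \<sigma>))"

lemma abs_flow_integral_increment_le:
  assumes H: "hoelder_SH \<Psi> \<alpha> C" and bound: "\<forall>\<gamma>\<in>SH. \<bar>\<Psi> \<gamma>\<bar> \<le> L"
    and SH: "\<tau> \<in> SH" and T: "0 \<le> T1" "T1 \<le> T2"
  shows "\<bar>flow_integral \<Psi> \<tau> T2 - flow_integral \<Psi> \<tau> T1\<bar> \<le> L * (T2 - T1)"
proof -
  have integrable: "(\<lambda>t. \<Psi> (geoflow t \<tau>)) integrable_on {a..b}" for a b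
    by (rule integrable_hoelder_SH_geoflow[OF H SH])
  have "flow_integral \<Psi> \<tau> T2 - flow_integral \<Psi> \<tau> T1 = integral {T1..T2} (\<lambda>t. \<Psi> (geoflow t \<tau>))"
    unfolding flow_integral_def
    using Henstock_Kurzweil_Integration.integral_combine[OF T integrable] by simp
  also have "norm \<dots> \<le> integral {T1..T2} (\<lambda>_. L)"
    by (rule integral_norm_bound_integral) (use integrable bound geoflow_SH[OF SH] in auto)
  also have "\<dots> = L * (T2 - T1)"
    using T by simp
  finally show ?thesis by simp
qed

lemma CAT_minus_one_flow_integral_same_time_le:
  fixes \<sigma> \<tau> :: "real \<Rightarrow> 'a::metric_space"
  assumes cat: "CAT_minus_one TYPE('a)" and H: "hoelder_SH \<Psi> \<alpha> C"
    and SH: "\<sigma> \<in> SH" "\<tau> \<in> SH" and origin: "\<sigma> 0 = \<tau> 0"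
    and T: "0 \<le> T1" "T1 \<le> T2" and close: "dist (\<sigma> T1) (\<tau> T2) \<le> r"
  defines "Q \<equiv> (sqrt (2 * cosh r) + 4) * exp_half_abs_integral / 2"
  shows "\<bar>flow_integral \<Psi> \<sigma> T1 - flow_integral \<Psi> \<tau> T1\<bar> \<le> 8 * \<bar>C\<bar> * Q powr \<alpha> / \<alpha>"
proof -
  have \<alpha>: "0 < \<alpha>" using H by (simp add: hoelder_SH_def)
  define c where "c = 2 * \<bar>C\<bar> * Q powr \<alpha>"
  have c: "0 \<le> c" by (simp add: c_def)
  define h where "h t = c * (exp (\<alpha> / 2 * (t - T1)) + exp (- (\<alpha> / 2) * t))" for t
  have h: "(h has_integral c * (2 * (1 - exp (- (\<alpha> / 2) * T1)) / (\<alpha> / 2))) {0..T1}"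
    unfolding h_def using \<alpha> T by (intro has_integral_mult_right has_integral_exp_two_sided) auto
  have integrable: "(\<lambda>t. \<Psi> (geoflow t \<gamma>)) integrable_on {0..T1}" if "\<gamma> \<in> SH" for \<gamma>
    by (rule integrable_hoelder_SH_geoflow[OF H that])
  have "flow_integral \<Psi> \<sigma> T1 - flow_integral \<Psi> \<tau> T1
      = integral {0..T1} (\<lambda>t. \<Psi> (geoflow t \<sigma>) - \<Psi> (geoflow t \<tau>))"
    unfolding flow_integral_def by (rule integral_diff[symmetric]) (use integrable SH in auto)
  also have "norm \<dots> \<le> integral {0..T1} h"
    using CAT_minus_one_hoelder_geoflow_diff_le[OF cat H SH origin T close] integrable SH h
    by (intro integral_norm_bound_integral integrable_diff)
       (auto simp: h_def c_def Q_def has_integral_integrable)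
  also have "\<dots> = c * (2 * (1 - exp (- (\<alpha> / 2) * T1)) / (\<alpha> / 2))"
    using h by (rule integral_unique)
  also have "\<dots> \<le> c * (2 / (\<alpha> / 2))"
    using \<alpha> c by (intro mult_left_mono divide_right_mono) auto
  also have "\<dots> = 8 * \<bar>C\<bar> * Q powr \<alpha> / \<alpha>"
    by (simp add: c_def)
  finally show ?thesis by simp
qed

definition common_origin_bound :: "real \<Rightarrow> real \<Rightarrow> real \<Rightarrow> real \<Rightarrow> real" where
  "common_origin_bound \<alpha> C L r =
     L * r + 8 * \<bar>C\<bar> * ((sqrt (2 * cosh r) + 4) * exp_half_abs_integral / 2) powr \<alpha> / \<alpha>"

lemma CAT_minus_one_flow_integral_common_origin_le:
  fixes \<sigma> \<tau> :: "real \<Rightarrow> 'a::metric_space"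
  assumes cat: "CAT_minus_one TYPE('a)" and H: "hoelder_SH \<Psi> \<alpha> C"
    and bound: "\<forall>\<gamma>\<in>SH. \<bar>\<Psi> \<gamma>\<bar> \<le> L"
    and SH: "\<sigma> \<in> SH" "\<tau> \<in> SH" and origin: "\<sigma> 0 = \<tau> 0"
    and T: "0 \<le> T1" "0 \<le> T2" and close: "dist (\<sigma> T1) (\<tau> T2) \<le> r"
  shows "\<bar>flow_integral \<Psi> \<sigma> T1 - flow_integral \<Psi> \<tau> T2\<bar> \<le> common_origin_bound \<alpha> C L r"
proof -
  have L: "0 \<le> L" using bound SH(1) by force
  have ordered: "\<bar>flow_integral \<Psi> \<sigma> T1 - flow_integral \<Psi> \<tau> T2\<bar> \<le> common_origin_bound \<alpha> C L r"
    if SH: "\<sigma> \<in> SH" "\<tau> \<in> SH" and origin: "\<sigma> 0 = \<tau> 0" and T: "0 \<le> T1" "T1 \<le> T2"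
      and close: "dist (\<sigma> T1) (\<tau> T2) \<le> r"
    for \<sigma> \<tau> :: "real \<Rightarrow> 'a" and T1 T2
  proof -
    have "T2 = dist (\<tau> 0) (\<tau> T2)"
      using SH_dist[OF SH(2), of 0 T2] T by simp
    also have "\<dots> \<le> dist (\<sigma> 0) (\<sigma> T1) + dist (\<sigma> T1) (\<tau> T2)"
      using dist_triangle[of "\<tau> 0" "\<tau> T2" "\<sigma> T1"] origin by simp
    also have "\<dots> \<le> T1 + r"
      using SH_dist[OF SH(1), of 0 T1] T close by simp
    finally have "L * (T2 - T1) \<le> L * r"
      using L by (intro mult_left_mono) auto
    hence "\<bar>flow_integral \<Psi> \<tau> T2 - flow_integral \<Psi> \<tau> T1\<bar> \<le> L * r"
      using abs_flow_integral_increment_le[OF H bound SH(2) T] by linarith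
    thus ?thesis
      using CAT_minus_one_flow_integral_same_time_le[OF cat H SH origin T close]
      unfolding common_origin_bound_def by linarith
  qed
  show ?thesis
  proof (cases "T1 \<le> T2")
    case True
    thus ?thesis using ordered[OF SH origin T(1) _ close] by simp
  next
    case False
    thus ?thesis using ordered[OF SH(2,1) origin[symmetric] T(2), of T1] close
      by (simp add: dist_commute abs_minus_commute)
  qed
qed

lemma flow_integral_hat_reverse:
  assumes H: "hoelder_SH \<Psi> \<alpha> C" and SH: "\<tau> \<in> SH" and T: "0 \<le> T"
  shows "flow_integral (hat \<Psi>) (\<lambda>s. \<tau> (T - s)) T = flow_integral \<Psi> \<tau> T"
proof -
  have "flip (geoflow t (\<lambda>s. \<tau> (T - s))) = geoflow (T - t) \<tau>" for t
    by (rule ext) (simp add: flip_def geoflow_def algebra_simps)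
  hence "hat \<Psi> (geoflow t (\<lambda>s. \<tau> (T - s))) = \<Psi> (geoflow (T - t) \<tau>)" for t
    by (simp add: hat_def)
  thus ?thesis
    unfolding flow_integral_def
    using integral_reverse_real[OF integrable_hoelder_SH_geoflow[OF H SH] T] by simp
qed

text \<open>Compare both geodesics with the geodesic \<open>\<tau>\<close> from \<open>\<sigma>1 0\<close> to \<open>\<sigma>2 T2\<close>. With \<open>\<sigma>1\<close> it shares
  its origin; with \<open>\<sigma>2\<close> it shares its endpoint, and reversing both turns this into a common
  origin at the cost of replacing \<open>\<Psi>\<close> by \<open>hat \<Psi>\<close>.\<close>
lemma CAT_minus_one_flow_integral_diff_le:
  fixes \<sigma>1 \<sigma>2 \<tau> :: "real \<Rightarrow> 'a::metric_space"
  assumes cat: "CAT_minus_one TYPE('a)"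
    and H: "hoelder_SH \<Psi> \<alpha> C" and H_hat: "hoelder_SH (hat \<Psi>) \<beta> C'"
    and bound: "\<forall>\<gamma>\<in>SH. \<bar>\<Psi> \<gamma>\<bar> \<le> L"
    and SH: "\<sigma>1 \<in> SH" "\<sigma>2 \<in> SH" "\<tau> \<in> SH" and T: "0 \<le> T1" "0 \<le> T2" "0 \<le> T"
    and ends: "\<tau> 0 = \<sigma>1 0" "\<tau> T = \<sigma>2 T2"
    and close: "dist (\<sigma>1 0) (\<sigma>2 0) \<le> r" "dist (\<sigma>1 T1) (\<sigma>2 T2) \<le> r"
  shows "\<bar>flow_integral \<Psi> \<sigma>1 T1 - flow_integral \<Psi> \<sigma>2 T2\<bar>
           \<le> common_origin_bound \<alpha> C L r + common_origin_bound \<beta> C' L r"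
proof -
  have bound_hat: "\<forall>\<gamma>\<in>SH. \<bar>hat \<Psi> \<gamma>\<bar> \<le> L"
    using bound flip_SH by (auto simp: hat_def)
  have "\<bar>flow_integral \<Psi> \<sigma>1 T1 - flow_integral \<Psi> \<tau> T\<bar> \<le> common_origin_bound \<alpha> C L r"
    using CAT_minus_one_flow_integral_common_origin_le[OF cat H bound SH(1,3) _ T(1,3)] ends close
    by simp
  moreover have "\<bar>flow_integral (hat \<Psi>) (\<lambda>s. \<tau> (T - s)) T - flow_integral (hat \<Psi>) (\<lambda>s. \<sigma>2 (T2 - s)) T2\<bar>
      \<le> common_origin_bound \<beta> C' L r"
    using CAT_minus_one_flow_integral_common_origin_le[OF cat H_hat bound_hat
        reverse_SH[OF SH(3)] reverse_SH[OF SH(2)] _ T(3,2)] ends close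
    by simp
  ultimately show ?thesis
    using flow_integral_hat_reverse[OF H SH(3) T(3)] flow_integral_hat_reverse[OF H SH(2) T(2)]
    by linarith
qed

lemma SH_through_points:
  assumes "geodesic_space TYPE('a::metric_space)"
    and extend: "\<And>c p q. geodesic_segment c (p::'a) q \<Longrightarrow> \<exists>\<gamma>\<in>SH. \<forall>t\<in>{0..dist p q}. \<gamma> t = c t"
  shows "\<exists>\<gamma>\<in>SH. \<gamma> 0 = p \<and> \<gamma> (dist p q) = (q::'a)"
proof -
  obtain c where c: "geodesic_segment c p q"
    using assms(1) by (auto simp: geodesic_space_def)
  then obtain \<gamma> where \<gamma>: "\<gamma> \<in> SH" "\<forall>t\<in>{0..dist p q}. \<gamma> t = c t"
    using extend by blast
  have "\<gamma> 0 = p" "\<gamma> (dist p q) = q"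
    using c \<gamma>(2) by (simp_all add: geodesic_segment_def)
  with \<gamma>(1) show ?thesis by blast
qed

lemma dPhi_eq_flow_integral:
  assumes "\<exists>\<gamma>\<in>SH. \<gamma> 0 = p \<and> \<gamma> (dist p q) = q"
  shows "\<exists>\<gamma>\<in>SH. \<gamma> 0 = p \<and> \<gamma> (dist p q) = q \<and> dPhi \<Phi> p q = flow_integral \<Phi> \<gamma> (dist p q)"
proof -
  define \<gamma> where "\<gamma> = (SOME \<gamma>. \<gamma> \<in> SH \<and> \<gamma> 0 = p \<and> \<gamma> (dist p q) = q)"
  have "\<gamma> \<in> SH \<and> \<gamma> 0 = p \<and> \<gamma> (dist p q) = q"
    unfolding \<gamma>_def using someI_ex[OF assms[unfolded Bex_def]] by blast
  moreover have "dPhi \<Phi> p q = flow_integral \<Phi> \<gamma> (dist p q)"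
    by (cases "p = q") (simp_all add: dPhi_def flow_integral_def \<gamma>_def Let_def)
  ultimately show ?thesis by blast
qed

theorem corollary4p5:
  fixes \<Phi> :: "(real \<Rightarrow> 'a::metric_space) \<Rightarrow> real" and L :: real
  assumes cat: "CAT_minus_one TYPE('a)"
    and extend: "\<And>c p q. geodesic_segment c (p::'a) q \<Longrightarrow>
                   \<exists>\<gamma>\<in>SH. \<forall>t\<in>{0..dist p q}. \<gamma> t = c t"
    and PhiH: "\<Phi> \<in> Hclass"
    and hoel: "\<exists>\<alpha> C. hoelder_SH \<Phi> \<alpha> C \<and> C \<le> L"
    and hoel_hat: "\<exists>\<beta> C. hoelder_SH (hat \<Phi>) \<beta> C \<and> C \<le> L"
    and bound: "\<forall>\<gamma>\<in>SH. \<bar>\<Phi> \<gamma>\<bar> \<le> L"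
  shows "\<exists>D :: real \<Rightarrow> real. \<forall>\<gamma>1\<in>SH. \<forall>\<gamma>2\<in>SH. \<forall>r\<ge>0. \<forall>t1 t2.
           dist (\<gamma>1 0) (\<gamma>2 0) \<le> r \<and> dist (\<gamma>1 t1) (\<gamma>2 t2) \<le> r \<longrightarrow>
           \<bar>dPhi \<Phi> (\<gamma>1 0) (\<gamma>1 t1) - dPhi \<Phi> (\<gamma>2 0) (\<gamma>2 t2)\<bar> \<le> D r"
proof -
  obtain \<alpha> C \<beta> C' where H: "hoelder_SH \<Phi> \<alpha> C" and H_hat: "hoelder_SH (hat \<Phi>) \<beta> C'"
    using hoel hoel_hat by blast
  have through: "\<exists>\<gamma>\<in>SH. \<gamma> 0 = p \<and> \<gamma> (dist p q) = q" for p q :: 'a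
    using SH_through_points[OF _ extend] cat by (simp add: CAT_minus_one_def)
  show ?thesis
  proof (intro exI[of _ "\<lambda>r. common_origin_bound \<alpha> C L r + common_origin_bound \<beta> C' L r"]
      ballI allI impI, elim conjE)
    fix \<gamma>1 \<gamma>2 :: "real \<Rightarrow> 'a" and r t1 t2 :: real
    assume close: "dist (\<gamma>1 0) (\<gamma>2 0) \<le> r" "dist (\<gamma>1 t1) (\<gamma>2 t2) \<le> r"
    obtain \<sigma>1 \<sigma>2 \<tau> where \<sigma>1: "\<sigma>1 \<in> SH" "\<sigma>1 0 = \<gamma>1 0" "\<sigma>1 (dist (\<gamma>1 0) (\<gamma>1 t1)) = \<gamma>1 t1"
        "dPhi \<Phi> (\<gamma>1 0) (\<gamma>1 t1) = flow_integral \<Phi> \<sigma>1 (dist (\<gamma>1 0) (\<gamma>1 t1))"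
      and \<sigma>2: "\<sigma>2 \<in> SH" "\<sigma>2 0 = \<gamma>2 0" "\<sigma>2 (dist (\<gamma>2 0) (\<gamma>2 t2)) = \<gamma>2 t2"
        "dPhi \<Phi> (\<gamma>2 0) (\<gamma>2 t2) = flow_integral \<Phi> \<sigma>2 (dist (\<gamma>2 0) (\<gamma>2 t2))"
      and \<tau>: "\<tau> \<in> SH" "\<tau> 0 = \<gamma>1 0" "\<tau> (dist (\<gamma>1 0) (\<gamma>2 t2)) = \<gamma>2 t2"
      using dPhi_eq_flow_integral[OF through] through by metis
    show "\<bar>dPhi \<Phi> (\<gamma>1 0) (\<gamma>1 t1) - dPhi \<Phi> (\<gamma>2 0) (\<gamma>2 t2)\<bar>
        \<le> common_origin_bound \<alpha> C L r + common_origin_bound \<beta> C' L r"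
      using CAT_minus_one_flow_integral_diff_le[OF cat H H_hat bound \<sigma>1(1) \<sigma>2(1) \<tau>(1)
          zero_le_dist[of "\<gamma>1 0" "\<gamma>1 t1"] zero_le_dist[of "\<gamma>2 0" "\<gamma>2 t2"]
          zero_le_dist[of "\<gamma>1 0" "\<gamma>2 t2"]] \<sigma>1 \<sigma>2 \<tau> close
      by simp
  qed
qed

end
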